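(* Let $G$ be a group and $H$ a subgroup. Let $\sim$ be a nontrivial equivalence relation on $G/H - \{\bar{1}\}$ such that if $\bar{a} \sim \bar{b}$ and $\bar{a} \neq \bar{b}$ then $\overline{a^{-1}} \sim \overline{a^{-1}b}$. Let $a,b \in G$. If $\overline{g^{-1}a} \sim \overline{g^{-1}b}$ for all $g \notin aH \cup bH$, then $\bar{a} = \bar{b}$.
   Context: $G/H$ is the set of left cosets and $\bar{a} = aH$. An equivalence relation is nontrivial if it has at least two classes. *)

theory Defs
  imports "HOL-Algebra.Left_Coset"
begin

end

theory Submission
  imports Defs
begin

(* Suppose aH \<noteq> bH and put c = a\<inverse>b, so c \<notin> H.  For every z with zH \<notin> {H, cH},
   the element g = az lies outside aH \<union> bH, and g\<inverse>a = z\<inverse>, g\<inverse>b = z\<inverse>c.  The hypothesis gives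
   z\<inverse>H \<sim> z\<inverse>cH, two distinct cosets, and the closure property of \<sim> applied to them
   yields zH \<sim> cH.  So every class of \<sim> contains cH, i.e. \<sim> has only one class. *)

lemma quotient_eq_singletonI:
  assumes "equiv A r" and "c \<in> A" and "\<And>x. x \<in> A \<Longrightarrow> (x, c) \<in> r"
  shows "A // r = {r `` {c}}"
proof -
  have "r `` {x} = r `` {c}" if "x \<in> A" for x
    using equiv_class_eq[OF assms(1) assms(3)[OF that]] .
  then show ?thesis
    unfolding quotient_def using assms(2) by blast
qed

lemma (in group) l_coset_mem_iff:
  assumes "subgroup H G" and "x \<in> carrier G" and "y \<in> carrier G"
  shows "y \<in> x <# H \<longleftrightarrow> inv x \<otimes> y \<in> H"
  using subgroup.lcos_module_imp[OF assms(1) is_group assms(2)]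
    subgroup.lcos_module_rev[OF assms(1) is_group assms(2,3)] by blast

lemma (in group) l_coset_eq_iff:
  assumes H: "subgroup H G" and x: "x \<in> carrier G" and y: "y \<in> carrier G"
  shows "x <# H = y <# H \<longleftrightarrow> inv x \<otimes> y \<in> H"
proof
  assume "x <# H = y <# H"
  then have "y \<in> x <# H"
    using lcos_self[OF y H] by simp
  then show "inv x \<otimes> y \<in> H"
    using l_coset_mem_iff[OF H x y] by simp
next
  assume "inv x \<otimes> y \<in> H"
  then have "y \<in> x <# H"
    using l_coset_mem_iff[OF H x y] by simp
  then show "x <# H = y <# H"
    using l_repr_independence[OF _ x H] by simp
qed

lemma (in group) l_coset_eq_one_iff:
  assumes "subgroup H G" and "x \<in> carrier G"
  shows "x <# H = \<one> <# H \<longleftrightarrow> x \<in> H"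
proof -
  have "x <# H = \<one> <# H \<longleftrightarrow> inv x \<in> H"
    using l_coset_eq_iff[OF assms one_closed] assms(2) by simp
  also have "\<dots> \<longleftrightarrow> x \<in> H"
    using subgroup.m_inv_closed[OF assms(1), of x] subgroup.m_inv_closed[OF assms(1), of "inv x"]
      inv_inv[OF assms(2)] by auto
  finally show ?thesis .
qed

lemma (in group) mult_notin_l_cosets:
  assumes H: "subgroup H G" and a: "a \<in> carrier G" and b: "b \<in> carrier G"
    and z: "z \<in> carrier G" and zH: "z \<notin> H" and z_ne: "z <# H \<noteq> (inv a \<otimes> b) <# H"
  shows "a \<otimes> z \<notin> (a <# H) \<union> (b <# H)"
proof -
  have "inv a \<otimes> (a \<otimes> z) \<notin> H"
    using zH a z by (simp add: m_assoc[symmetric])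
  moreover have "inv b \<otimes> (a \<otimes> z) \<notin> H"
  proof
    assume "inv b \<otimes> (a \<otimes> z) \<in> H"
    then have "inv (inv b \<otimes> (a \<otimes> z)) \<in> H"
      by (rule subgroup.m_inv_closed[OF H])
    moreover have "inv (inv b \<otimes> (a \<otimes> z)) = inv z \<otimes> (inv a \<otimes> b)"
      using a b z by (simp add: inv_mult_group m_assoc)
    ultimately have "inv z \<otimes> (inv a \<otimes> b) \<in> H"
      by simp
    then show False
      using l_coset_eq_iff[OF H z, of "inv a \<otimes> b"] a b z_ne by simp
  qed
  moreover have az: "a \<otimes> z \<in> carrier G"
    using a z by simp
  ultimately show ?thesis
    using l_coset_mem_iff[OF H a az] l_coset_mem_iff[OF H b az] by blast
qed

lemma (in group) l_coset_rel_inv_mult: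
  assumes H: "subgroup H G"
    and cond: "\<And>x y. x \<in> carrier G \<Longrightarrow> y \<in> carrier G \<Longrightarrow>
                 (x <# H, y <# H) \<in> R \<Longrightarrow> x <# H \<noteq> y <# H \<Longrightarrow>
                 (inv x <# H, (inv x \<otimes> y) <# H) \<in> R"
    and hyp: "\<And>g. g \<in> carrier G \<Longrightarrow> g \<notin> (a <# H) \<union> (b <# H) \<Longrightarrow>
                 ((inv g \<otimes> a) <# H, (inv g \<otimes> b) <# H) \<in> R"
    and a: "a \<in> carrier G" and b: "b \<in> carrier G" and c: "inv a \<otimes> b \<notin> H"
    and z: "z \<in> carrier G" and zH: "z \<notin> H" and z_ne: "z <# H \<noteq> (inv a \<otimes> b) <# H"
  shows "(z <# H, (inv a \<otimes> b) <# H) \<in> R"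
proof -
  define g where "g = a \<otimes> z"
  have "g \<in> carrier G" and "g \<notin> (a <# H) \<union> (b <# H)"
    using mult_notin_l_cosets[OF H a b z zH z_ne] a z by (simp_all add: g_def)
  moreover have "inv g \<otimes> a = inv z" and "inv g \<otimes> b = inv z \<otimes> (inv a \<otimes> b)"
    using a b z by (simp_all add: g_def inv_mult_group m_assoc)
  ultimately have rel: "(inv z <# H, (inv z \<otimes> (inv a \<otimes> b)) <# H) \<in> R"
    using hyp by metis
  have "inv z <# H \<noteq> (inv z \<otimes> (inv a \<otimes> b)) <# H"
    using l_coset_eq_iff[OF H, of "inv z" "inv z \<otimes> (inv a \<otimes> b)"] a b z c
    by (simp add: m_assoc[symmetric])
  from cond[OF _ _ rel this] show ?thesis
    using a b z by (simp add: m_assoc[symmetric])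
qed

theorem lemma3p8:
  fixes G (structure) and H :: "'a set" and R :: "('a set \<times> 'a set) set"
    and a b :: 'a
  assumes grp: "group G"
    and sub: "subgroup H G"
    and eqv: "equiv (lcosets H - {\<one> <# H}) R"
    and nontriv: "\<exists>C1 \<in> (lcosets H - {\<one> <# H}) // R.
                    \<exists>C2 \<in> (lcosets H - {\<one> <# H}) // R. C1 \<noteq> C2"
    and cond: "\<And>x y. x \<in> carrier G \<Longrightarrow> y \<in> carrier G \<Longrightarrow>
                 (x <# H, y <# H) \<in> R \<Longrightarrow> x <# H \<noteq> y <# H \<Longrightarrow>
                 (inv x <# H, (inv x \<otimes> y) <# H) \<in> R"
    and a: "a \<in> carrier G" and b: "b \<in> carrier G"
    and hyp: "\<And>g. g \<in> carrier G \<Longrightarrow> g \<notin> (a <# H) \<union> (b <# H) \<Longrightarrow>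
                 ((inv g \<otimes> a) <# H, (inv g \<otimes> b) <# H) \<in> R"
  shows "a <# H = b <# H"
proof (rule ccontr)
  interpret group G by fact
  let ?X = "lcosets H - {\<one> <# H}" and ?c = "inv a \<otimes> b"
  assume "a <# H \<noteq> b <# H"
  then have c: "?c \<notin> H"
    using l_coset_eq_iff[OF sub a b] by simp
  have cX: "?c <# H \<in> ?X"
    using c l_coset_eq_one_iff[OF sub, of ?c] a b unfolding LCOSETS_def by auto
  have "(A, ?c <# H) \<in> R" if "A \<in> ?X" for A
  proof -
    from that obtain z where z: "z \<in> carrier G" "A = z <# H" and "z \<notin> H"
      using l_coset_eq_one_iff[OF sub] unfolding LCOSETS_def by auto
    show ?thesis
    proof (cases "A = ?c <# H")
      case True
      then show ?thesis
        using eqv cX unfolding equiv_def refl_on_def by blast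
    next
      case False
      then show ?thesis
        using l_coset_rel_inv_mult[OF sub cond hyp a b c z(1) \<open>z \<notin> H\<close>] z(2) by simp
    qed
  qed
  then have "?X // R = {R `` {?c <# H}}"
    using quotient_eq_singletonI[OF eqv cX] by blast
  with nontriv show False
    by blast
qed

end
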